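(* Let $n\ge 2$, let $\sigma,\delta,\tau\in\mathbb{C}$ with $\sigma\tau\ne0$, and suppose the tridiagonal Toeplitz matrix $T=(n;\sigma,\delta,\tau)$ is normal. For $h=1,\dots,n$ let $\widetilde{x}_h$ be a unit right eigenvector of $T$ associated with $\lambda_h=\delta+2\sqrt{\sigma\tau}\cos\frac{h\pi}{n+1}$. Then \[ \kappa(\widetilde{x}_h)= \begin{cases} \left(4|\sigma|\sin\frac{\pi}{2(n+1)}\sin\frac{(2h-1)\pi}{2(n+1)}\right)^{-1}, & 1<h\le\frac n2 \text{ or } h=n,\\[1mm] \left(4|\sigma|\sin\frac{\pi}{2(n+1)}\sin\frac{(2h+1)\pi}{2(n+1)}\right)^{-1}, & h=1 \text{ or } \frac n2<h<n. \end{cases} \] In particular $\kappa(\widetilde{x}_h)$ depends only on $h$, $n$ and $|\sigma|$. Moreover \[ \max_{h=1,\dots,n}\kappa(\widetilde{x}_h)=\left(4|\sigma|\sin\frac{\pi}{2(n+1)}\sin\frac{3\pi}{2(n+1)}\right)^{-1}, \] and this maximum is attained by the eigenvectors associated with the indices $h=1,2,n-1,n$.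
   Context: $T=(n;\sigma,\delta,\tau)$ is the $n\times n$ tridiagonal Toeplitz matrix with diagonal $\delta$, superdiagonal $\tau$, subdiagonal $\sigma$; for $\sigma\tau\ne0$ its eigenvalues $\lambda_h=\delta+2\sqrt{\sigma\tau}\cos\frac{h\pi}{n+1}$ are simple. Eigenvector condition number: for $A\in\mathbb{C}^{n\times n}$ and a unit eigenvector $x$ associated with a simple eigenvalue $\mu$, let $U\in\mathbb{C}^{n\times(n-1)}$ have orthonormal columns spanning $\mathrm{Range}(A-\mu I)$; then $\kappa(x)=\|(\mu I-U^HAU)^{-1}\|_2$ (the condition number of the one-dimensional invariant subspace spanned by $x$). *)

theory Defs
  imports "HOL-Analysis.Analysis" "Jordan_Normal_Form.Schur_Decomposition"
begin

definition tridiag_toeplitz :: "nat \<Rightarrow> complex \<Rightarrow> complex \<Rightarrow> complex \<Rightarrow> complex mat" where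
  "tridiag_toeplitz n \<sigma> \<delta> \<tau> = mat n n (\<lambda>(i,j).
     if i = j then \<delta> else if j = i + 1 then \<tau> else if i = j + 1 then \<sigma> else 0)"

definition vnorm :: "complex vec \<Rightarrow> real" where
  "vnorm v = sqrt (\<Sum>i<dim_vec v. (cmod (v $ i))\<^sup>2)"

definition opnorm2 :: "complex mat \<Rightarrow> real" where
  "opnorm2 M = Sup {vnorm (M *\<^sub>v x) | x. x \<in> carrier_vec (dim_col M) \<and> vnorm x = 1}"

definition mat_inv :: "complex mat \<Rightarrow> complex mat" where
  "mat_inv B = (SOME C. C \<in> carrier_mat (dim_row B) (dim_row B) \<and>
       B * C = 1\<^sub>m (dim_row B) \<and> C * B = 1\<^sub>m (dim_row B))"

definition normal_mat :: "complex mat \<Rightarrow> bool" where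
  "normal_mat A \<longleftrightarrow> A * mat_adjoint A = mat_adjoint A * A"

definition range_basis :: "complex mat \<Rightarrow> complex \<Rightarrow> complex mat \<Rightarrow> bool" where
  "range_basis A \<mu> U \<longleftrightarrow> (let n = dim_row A in
     U \<in> carrier_mat n (n - 1) \<and> mat_adjoint U * U = 1\<^sub>m (n - 1) \<and>
     {(A - \<mu> \<cdot>\<^sub>m 1\<^sub>m n) *\<^sub>v y | y. y \<in> carrier_vec n} = {U *\<^sub>v z | z. z \<in> carrier_vec (n - 1)})"

definition eigvec_cond :: "complex mat \<Rightarrow> complex vec \<Rightarrow> real" where
  "eigvec_cond A x = (let \<mu> = (SOME \<mu>. A *\<^sub>v x = \<mu> \<cdot>\<^sub>v x);
                          U = (SOME U. range_basis A \<mu> U);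
                          m = dim_row A - 1 in
     opnorm2 (mat_inv (\<mu> \<cdot>\<^sub>m 1\<^sub>m m - mat_adjoint U * A * U)))"

end

theory Submission
  imports Defs
begin

(*
  Normality of T forces |sigma| = |tau|: compare the (0,0) entries of T T^H and T^H T.
  Then rho = sqrt(sigma tau) / tau has modulus one, and the vectors
  v_h = (rho^k sin ((k + 1) theta_h))_k, theta_h = h pi / (n + 1), are eigenvectors of T for lambda_h
  and of T^H for the conjugate of lambda_h.  Hence they are pairwise orthogonal and T = W D W^H
  with W unitary and D diagonal.

  For a matrix of this form and a simple eigenvalue mu = lambda_h, the columns of W other than the
  h-th one span the range of T - mu I.  So if U is an orthonormal basis of that range, Z = U^H W'
  (W' is W without its h-th column) is unitary and mu I - U^H T U = Z diag (mu - lambda_j)_{j <> h} Z^H.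
  Thus kappa = max_{j <> h} 1 / |lambda_h - lambda_j|.

  Finally |lambda_h - lambda_j| = 2 |sigma| |cos theta_h - cos theta_j|.  Cosine decreases on [0, pi],
  so the nearest eigenvalue is a neighbour, and
  cos theta_j - cos theta_(j+1) = 2 sin (pi / (2 (n + 1))) sin ((2 j + 1) pi / (2 (n + 1))).
*)

section \<open>Adjoints, inner products and the Euclidean norm\<close>

lemma dim_row_mat_adjoint [simp]: "dim_row (mat_adjoint A) = dim_col A"
  and dim_col_mat_adjoint [simp]: "dim_col (mat_adjoint A) = dim_row A"
  unfolding mat_adjoint_def by (simp_all add: mat_of_rows_def)

lemma mat_adjoint_carrier [simp, intro]: "A \<in> carrier_mat r c \<Longrightarrow> mat_adjoint A \<in> carrier_mat c r"
  unfolding carrier_mat_def by simp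

lemma index_mat_adjoint [simp]:
  "i < dim_col A \<Longrightarrow> j < dim_row A \<Longrightarrow> mat_adjoint A $$ (i, j) = cnj (A $$ (j, i))"
  unfolding mat_adjoint_def by (simp add: mat_of_rows_def)

lemma mat_adjoint_adjoint [simp]: "mat_adjoint (mat_adjoint (A :: complex mat)) = A"
  by (rule eq_matI) auto

lemma mat_adjoint_mult:
  assumes "A \<in> carrier_mat r k" "B \<in> carrier_mat k c"
  shows "mat_adjoint (A * B) = mat_adjoint B * mat_adjoint (A :: complex mat)"
  using assms by (intro eq_matI) (auto simp: scalar_prod_def sum_conjugate[symmetric] mult.commute)

lemma index_mat_adjoint_mult_self:
  "i < dim_col W \<Longrightarrow> j < dim_col W \<Longrightarrow> (mat_adjoint W * W) $$ (i, j) = col W j \<bullet>c col (W :: complex mat) i"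
  by (simp add: scalar_prod_def mult.commute)

lemma mat_adjoint_mult_self_eq_oneI:
  assumes "\<And>i j. i < dim_col W \<Longrightarrow> j < dim_col W \<Longrightarrow> col W j \<bullet>c col W i = (if i = j then 1 else 0)"
  shows "mat_adjoint W * W = 1\<^sub>m (dim_col (W :: complex mat))"
proof (rule eq_matI)
  fix i j assume "i < dim_row (1\<^sub>m (dim_col W))" "j < dim_col (1\<^sub>m (dim_col W))"
  then show "(mat_adjoint W * W) $$ (i, j) = 1\<^sub>m (dim_col W) $$ (i, j)"
    using assms by (subst index_mat_adjoint_mult_self) auto
qed auto

lemma unitary_mult_adjoint:
  "Z \<in> carrier_mat m m \<Longrightarrow> mat_adjoint Z * Z = 1\<^sub>m m \<Longrightarrow> Z * mat_adjoint (Z :: complex mat) = 1\<^sub>m m"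
  by (rule mat_mult_left_right_inverse) auto

lemma cscalar_prod_mult_mat_vec:
  assumes "A \<in> carrier_mat r c" "u \<in> carrier_vec c" "w \<in> carrier_vec r"
  shows "(A *\<^sub>v u) \<bullet>c w = u \<bullet>c (mat_adjoint A *\<^sub>v (w :: complex vec))"
proof -
  have "(A *\<^sub>v u) \<bullet>c w = (\<Sum>i<r. \<Sum>l<c. A $$ (i, l) * u $ l * cnj (w $ i))"
    using assms by (auto simp: scalar_prod_def lessThan_atLeast0 sum_distrib_right)
  also have "\<dots> = (\<Sum>l<c. \<Sum>i<r. A $$ (i, l) * u $ l * cnj (w $ i))"
    by (rule sum.swap)
  also have "\<dots> = u \<bullet>c (mat_adjoint A *\<^sub>v w)"
    using assms by (auto simp: scalar_prod_def lessThan_atLeast0 sum_distrib_left mult_ac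
        intro!: sum.cong)
  finally show ?thesis .
qed

lemma cscalar_prod_eigenvectors_eq_0:
  assumes A: "A \<in> carrier_mat n n" and "u \<in> carrier_vec n" "v \<in> carrier_vec n"
    and Au: "A *\<^sub>v u = a \<cdot>\<^sub>v u" and Av: "mat_adjoint A *\<^sub>v v = cnj b \<cdot>\<^sub>v v" and "a \<noteq> b"
  shows "u \<bullet>c (v :: complex vec) = 0"
proof -
  have "a * (u \<bullet>c v) = (A *\<^sub>v u) \<bullet>c v"
    using assms by (simp add: Au)
  also have "\<dots> = u \<bullet>c (mat_adjoint A *\<^sub>v v)"
    using assms by (intro cscalar_prod_mult_mat_vec) auto
  also have "\<dots> = b * (u \<bullet>c v)"
    using assms by (simp add: Av conjugate_smult_vec)
  finally show ?thesis using \<open>a \<noteq> b\<close> by simp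
qed

lemma cscalar_prod_smult:
  "u \<in> carrier_vec n \<Longrightarrow> w \<in> carrier_vec n \<Longrightarrow> (a \<cdot>\<^sub>v u) \<bullet>c (b \<cdot>\<^sub>v w) = a * cnj b * (u \<bullet>c (w :: complex vec))"
  by (simp add: scalar_prod_def sum_distrib_left mult_ac)

lemma vnorm_square: "(vnorm v)\<^sup>2 = (\<Sum>i<dim_vec v. (cmod (v $ i))\<^sup>2)"
  unfolding vnorm_def by (simp add: sum_nonneg)

lemma vnorm_nonneg: "vnorm v \<ge> 0"
  unfolding vnorm_def by (simp add: sum_nonneg)

lemma cscalar_prod_self: "(v :: complex vec) \<bullet>c v = complex_of_real ((vnorm v)\<^sup>2)"
proof -
  have "v \<bullet>c v = (\<Sum>i<dim_vec v. v $ i * cnj (v $ i))"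
    unfolding scalar_prod_def by (simp add: lessThan_atLeast0)
  also have "\<dots> = complex_of_real ((vnorm v)\<^sup>2)"
    unfolding vnorm_square of_real_sum by (simp only: complex_norm_square)
  finally show ?thesis .
qed

lemma vnorm_eq_0_iff: "v \<in> carrier_vec n \<Longrightarrow> vnorm v = 0 \<longleftrightarrow> v = 0\<^sub>v n"
  using cscalar_prod_self[of v] conjugate_square_eq_0_vec[of v n] by auto

lemma vnorm_smult: "vnorm (a \<cdot>\<^sub>v (v :: complex vec)) = cmod a * vnorm v"
proof -
  have "(vnorm (a \<cdot>\<^sub>v v))\<^sup>2 = (cmod a * vnorm v)\<^sup>2"
    by (simp add: vnorm_square norm_mult power_mult_distrib sum_distrib_left)
  then show ?thesis using vnorm_nonneg by (simp add: power2_eq_iff_nonneg)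
qed

lemma vnorm_unit_vec: "k < m \<Longrightarrow> vnorm (unit_vec m k :: complex vec) = 1"
  unfolding vnorm_def unit_vec_def by (simp add: if_distrib[of cmod] if_distrib[of power2] cong: if_cong)

lemma vnorm_isometry:
  assumes "Q \<in> carrier_mat r c" "mat_adjoint Q * Q = 1\<^sub>m c" "u \<in> carrier_vec c"
  shows "vnorm (Q *\<^sub>v u) = vnorm (u :: complex vec)"
proof -
  have "(Q *\<^sub>v u) \<bullet>c (Q *\<^sub>v u) = u \<bullet>c (mat_adjoint Q *\<^sub>v (Q *\<^sub>v u))"
    using assms by (intro cscalar_prod_mult_mat_vec) auto
  also have "mat_adjoint Q *\<^sub>v (Q *\<^sub>v u) = u"
    using assms by (metis assoc_mult_mat_vec mat_adjoint_carrier one_mult_mat_vec)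
  finally have "(vnorm (Q *\<^sub>v u))\<^sup>2 = (vnorm u)\<^sup>2"
    unfolding cscalar_prod_self of_real_eq_iff .
  then show ?thesis using vnorm_nonneg by (simp add: power2_eq_iff_nonneg)
qed

lemma col_eq_mult_unit_vec:
  assumes "(Z :: 'a :: semiring_1 mat) \<in> carrier_mat n m" "k < m"
  shows "col Z k = Z *\<^sub>v unit_vec m k"
proof -
  have "col Z k = Z *\<^sub>v col (1\<^sub>m m) k"
    using col_mult2[OF assms(1) one_carrier_mat assms(2)] right_mult_one_mat[OF assms(1)] by simp
  also have "col (1\<^sub>m m) k = (unit_vec m k :: 'a vec)"
    using assms(2) by (rule col_one)
  finally show ?thesis .
qed

section \<open>Unitarily diagonalised matrices\<close>

lemma mat_diag_mult_vec: "u \<in> carrier_vec m \<Longrightarrow> mat_diag m d *\<^sub>v u = vec m (\<lambda>i. d i * u $ i)"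
  by (rule eq_vecI) (auto simp: mat_diag_def scalar_prod_def if_distrib[of "\<lambda>x. x * _"] cong: if_cong)

lemma smult_one_mult_vec: "w \<in> carrier_vec n \<Longrightarrow> (a \<cdot>\<^sub>m 1\<^sub>m n) *\<^sub>v w = a \<cdot>\<^sub>v (w :: 'a :: comm_ring_1 vec)"
proof -
  have "a \<cdot>\<^sub>m 1\<^sub>m n = mat_diag n (\<lambda>_. a)"
    by (rule eq_matI) (auto simp: mat_diag_def)
  then show "w \<in> carrier_vec n \<Longrightarrow> (a \<cdot>\<^sub>m 1\<^sub>m n) *\<^sub>v w = a \<cdot>\<^sub>v w"
    by (auto simp: mat_diag_mult_vec)
qed

lemma vnorm_mat_diag_mult_vec_le:
  assumes "u \<in> carrier_vec m" and bound: "\<And>k. k < m \<Longrightarrow> cmod (d k) \<le> M" and "0 \<le> M"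
  shows "vnorm (mat_diag m d *\<^sub>v u) \<le> M * vnorm u"
proof -
  have "(vnorm (mat_diag m d *\<^sub>v u))\<^sup>2 = (\<Sum>i<m. (cmod (d i))\<^sup>2 * (cmod (u $ i))\<^sup>2)"
    using assms(1) by (simp add: vnorm_square mat_diag_mult_vec norm_mult power_mult_distrib)
  also have "\<dots> \<le> (\<Sum>i<m. M\<^sup>2 * (cmod (u $ i))\<^sup>2)"
    using bound by (intro sum_mono mult_right_mono power_mono) auto
  also have "\<dots> = (M * vnorm u)\<^sup>2"
    using assms by (simp add: vnorm_square power_mult_distrib sum_distrib_left)
  finally show ?thesis
    by (rule power2_le_imp_le) (simp add: \<open>0 \<le> M\<close> vnorm_nonneg)
qed

lemma unitary_diag_mult_vec:
  assumes Z: "Z \<in> carrier_mat m m" and y: "y \<in> carrier_vec m"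
  shows "Z * mat_diag m d * mat_adjoint Z *\<^sub>v y = Z *\<^sub>v (mat_diag m d *\<^sub>v (mat_adjoint Z *\<^sub>v y))"
proof -
  have ZH: "mat_adjoint Z \<in> carrier_mat m m" using Z by simp
  show ?thesis
    using Z ZH y mult_mat_vec_carrier[OF ZH y]
    by (simp add: assoc_mult_mat_vec[of _ m m _ m] mult_carrier_mat[of _ m m])
qed

lemma vnorm_unitary_diag_mult_vec_le:
  assumes Z: "Z \<in> carrier_mat m m" and unitary: "mat_adjoint Z * Z = 1\<^sub>m m" and y: "y \<in> carrier_vec m"
    and bound: "\<And>k. k < m \<Longrightarrow> cmod (d k) \<le> M" and "0 \<le> M"
  shows "vnorm (Z * mat_diag m d * mat_adjoint Z *\<^sub>v y) \<le> M * vnorm y"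
proof -
  have ZH: "mat_adjoint Z \<in> carrier_mat m m" using Z by simp
  have ZHy: "mat_adjoint Z *\<^sub>v y \<in> carrier_vec m" using ZH y by (rule mult_mat_vec_carrier)
  have "mat_adjoint (mat_adjoint Z) * mat_adjoint Z = 1\<^sub>m m"
    using unitary_mult_adjoint[OF Z unitary] by simp
  then have "vnorm (mat_adjoint Z *\<^sub>v y) = vnorm y"
    using ZH y by (intro vnorm_isometry) auto
  moreover have "vnorm (Z * mat_diag m d * mat_adjoint Z *\<^sub>v y) = vnorm (mat_diag m d *\<^sub>v (mat_adjoint Z *\<^sub>v y))"
    using unitary_diag_mult_vec[OF Z y] vnorm_isometry[OF Z unitary] mult_mat_vec_carrier[OF mat_diag_dim ZHy]
    by simp
  moreover have "vnorm (mat_diag m d *\<^sub>v (mat_adjoint Z *\<^sub>v y)) \<le> M * vnorm (mat_adjoint Z *\<^sub>v y)"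
    using ZHy bound \<open>0 \<le> M\<close> by (rule vnorm_mat_diag_mult_vec_le)
  ultimately show ?thesis by simp
qed

lemma unitary_diag_mult_col:
  assumes Z: "Z \<in> carrier_mat m m" and unitary: "mat_adjoint Z * Z = 1\<^sub>m m" and "k < m"
  shows "Z * mat_diag m d * mat_adjoint Z *\<^sub>v col Z k = d k \<cdot>\<^sub>v col Z k"
proof -
  have col: "col Z k = Z *\<^sub>v unit_vec m k"
    using Z \<open>k < m\<close> by (rule col_eq_mult_unit_vec)
  have "mat_adjoint Z *\<^sub>v col Z k = unit_vec m k"
    unfolding col using Z unitary by (subst assoc_mult_mat_vec[symmetric, of _ m m _ m]) auto
  moreover have "mat_diag m d *\<^sub>v unit_vec m k = d k \<cdot>\<^sub>v unit_vec m k"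
    by (rule eq_vecI) (auto simp: mat_diag_mult_vec unit_vec_def)
  ultimately show ?thesis
    using unitary_diag_mult_vec[OF Z col_dim[of Z k, unfolded carrier_matD(1)[OF Z]]] Z
    by (simp add: col mult_mat_vec)
qed

lemma opnorm2_unitary_diag:
  assumes Z: "Z \<in> carrier_mat m m" and unitary: "mat_adjoint Z * Z = 1\<^sub>m m" and "0 < m"
  shows "opnorm2 (Z * mat_diag m d * mat_adjoint Z) = (MAX k\<in>{..<m}. cmod (d k))"
proof -
  define M where "M = (MAX k\<in>{..<m}. cmod (d k))"
  have "M \<in> (\<lambda>k. cmod (d k)) ` {..<m}"
    unfolding M_def using \<open>0 < m\<close> by (intro Max_in) auto
  then obtain k0 where k0: "k0 < m" "cmod (d k0) = M" by auto
  have bound: "cmod (d k) \<le> M" if "k < m" for k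
    unfolding M_def using that by (intro Max_ge) auto
  have "0 \<le> M" using k0 by (metis norm_ge_zero)
  have col: "col Z k0 \<in> carrier_vec m" "vnorm (col Z k0) = 1"
    using vnorm_isometry[OF Z unitary unit_vec_carrier, of k0] vnorm_unit_vec[OF k0(1)]
      col_eq_mult_unit_vec[OF Z k0(1)] Z by simp_all
  let ?S = "{vnorm (Z * mat_diag m d * mat_adjoint Z *\<^sub>v y) | y.
              y \<in> carrier_vec (dim_col (Z * mat_diag m d * mat_adjoint Z)) \<and> vnorm y = 1}"
  have "Sup ?S = M"
  proof (rule cSup_eq_maximum)
    have "vnorm (Z * mat_diag m d * mat_adjoint Z *\<^sub>v col Z k0) = M"
      using unitary_diag_mult_col[OF Z unitary k0(1)] col k0(2) by (simp add: vnorm_smult)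
    then show "M \<in> ?S" using col Z by force
  next
    fix r assume "r \<in> ?S"
    then show "r \<le> M"
      using vnorm_unitary_diag_mult_vec_le[where d = d and M = M, OF Z unitary _ bound \<open>0 \<le> M\<close>] Z
      by fastforce
  qed
  then show ?thesis unfolding opnorm2_def M_def .
qed

lemma mat_inv_eqI:
  assumes B: "B \<in> carrier_mat m m" and C: "C \<in> carrier_mat m m" and "B * C = 1\<^sub>m m" "C * B = 1\<^sub>m m"
  shows "mat_inv B = C"
proof -
  have "\<exists>C. C \<in> carrier_mat m m \<and> B * C = 1\<^sub>m m \<and> C * B = 1\<^sub>m m"
    using assms by auto
  then have inv: "mat_inv B \<in> carrier_mat m m \<and> B * mat_inv B = 1\<^sub>m m \<and> mat_inv B * B = 1\<^sub>m m"
    unfolding mat_inv_def carrier_matD(1)[OF B] by (rule someI_ex)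
  then have inv_carrier: "mat_inv B \<in> carrier_mat m m" and inv_left: "mat_inv B * B = 1\<^sub>m m"
    by auto
  have "mat_inv B = mat_inv B * (B * C)"
    using \<open>B * C = 1\<^sub>m m\<close> by (simp add: right_mult_one_mat[OF inv_carrier])
  also have "\<dots> = C"
    using assoc_mult_mat[OF inv_carrier B C] inv_left C by simp
  finally show ?thesis .
qed

lemma unitary_conj_mult:
  assumes Z: "Z \<in> carrier_mat m m" and unitary: "mat_adjoint Z * Z = 1\<^sub>m m"
    and A: "A \<in> carrier_mat m m" and B: "B \<in> carrier_mat m m"
  shows "Z * A * mat_adjoint Z * (Z * B * mat_adjoint Z) = Z * (A * B) * mat_adjoint (Z :: complex mat)"
proof -
  have ZH: "mat_adjoint Z \<in> carrier_mat m m" using Z by simp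
  have ZB: "Z * B \<in> carrier_mat m m" using Z B by (rule mult_carrier_mat)
  have "Z * A * mat_adjoint Z * (Z * B * mat_adjoint Z) = Z * A * (mat_adjoint Z * (Z * B * mat_adjoint Z))"
    by (rule assoc_mult_mat[OF mult_carrier_mat[OF Z A] ZH mult_carrier_mat[OF ZB ZH]])
  also have "mat_adjoint Z * (Z * B * mat_adjoint Z) = mat_adjoint Z * (Z * B) * mat_adjoint Z"
    by (rule assoc_mult_mat[symmetric, OF ZH ZB ZH])
  also have "mat_adjoint Z * (Z * B) = B"
    using assoc_mult_mat[symmetric, OF ZH Z B] unitary B by simp
  also have "Z * A * (B * mat_adjoint Z) = Z * (A * B) * mat_adjoint Z"
    using assoc_mult_mat[OF Z A mult_carrier_mat[OF B ZH]] assoc_mult_mat[OF Z mult_carrier_mat[OF A B] ZH]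
      assoc_mult_mat[OF A B ZH] by simp
  finally show ?thesis .
qed

lemma mat_inv_unitary_diag:
  assumes Z: "Z \<in> carrier_mat m m" and unitary: "mat_adjoint Z * Z = 1\<^sub>m m"
    and nonzero: "\<And>k. k < m \<Longrightarrow> d k \<noteq> 0"
  shows "mat_inv (Z * mat_diag m d * mat_adjoint Z) = Z * mat_diag m (\<lambda>k. inverse (d k)) * mat_adjoint Z"
proof (rule mat_inv_eqI)
  have "mat_diag m (\<lambda>k. d k * inverse (d k)) = 1\<^sub>m m" "mat_diag m (\<lambda>k. inverse (d k) * d k) = 1\<^sub>m m"
    using nonzero by (auto simp: mat_diag_def)
  then show "Z * mat_diag m d * mat_adjoint Z * (Z * mat_diag m (\<lambda>k. inverse (d k)) * mat_adjoint Z) = 1\<^sub>m m"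
    "Z * mat_diag m (\<lambda>k. inverse (d k)) * mat_adjoint Z * (Z * mat_diag m d * mat_adjoint Z) = 1\<^sub>m m"
    using Z unitary unitary_mult_adjoint[OF Z unitary] by (simp_all add: unitary_conj_mult)
qed (use Z in auto)

lemma smult_one_minus_unitary_diag:
  assumes Z: "Z \<in> carrier_mat m m" and unitary: "mat_adjoint Z * Z = 1\<^sub>m m"
  shows "a \<cdot>\<^sub>m 1\<^sub>m m - Z * mat_diag m d * mat_adjoint Z = Z * mat_diag m (\<lambda>k. a - d k) * mat_adjoint (Z :: complex mat)"
proof -
  have ZH: "mat_adjoint Z \<in> carrier_mat m m" using Z by simp
  have "mat_diag m (\<lambda>k. a - d k) = a \<cdot>\<^sub>m 1\<^sub>m m - mat_diag m d"
    by (rule eq_matI) (auto simp: mat_diag_def)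
  then have "Z * mat_diag m (\<lambda>k. a - d k) = a \<cdot>\<^sub>m Z - Z * mat_diag m d"
    using mult_minus_distrib_mat[OF Z smult_carrier_mat[OF one_carrier_mat] mat_diag_dim]
      mult_smult_distrib[OF Z one_carrier_mat] Z by simp
  then have "Z * mat_diag m (\<lambda>k. a - d k) * mat_adjoint Z
      = a \<cdot>\<^sub>m (Z * mat_adjoint Z) - Z * mat_diag m d * mat_adjoint Z"
    using minus_mult_distrib_mat[OF smult_carrier_mat[OF Z] mult_carrier_mat[OF Z mat_diag_dim] ZH]
      mult_smult_assoc_mat[OF Z ZH] by simp
  then show ?thesis using unitary_mult_adjoint[OF Z unitary] by simp
qed

lemma mult_mat_diag_eqI:
  assumes "(A :: complex mat) \<in> carrier_mat n n" "W \<in> carrier_mat n m"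
    and "\<And>j. j < m \<Longrightarrow> A *\<^sub>v col W j = d j \<cdot>\<^sub>v col W j"
  shows "A * W = W * mat_diag m d"
proof (rule mat_col_eqI)
  fix j assume "j < dim_col (W * mat_diag m d)"
  then have j: "j < m" by (simp add: mat_diag_def)
  have "col (A * W) j = d j \<cdot>\<^sub>v col W j"
    using col_mult2[OF assms(1,2) j] assms(3)[OF j] by simp
  also have "\<dots> = col (W * mat_diag m d) j"
    using assms(2) j by (auto simp: mat_diag_mult_right mult.commute)
  finally show "col (A * W) j = col (W * mat_diag m d) j" .
qed (use assms in \<open>simp_all add: mat_diag_def\<close>)

lemma mult_mat_diag_eqD:
  assumes "(A :: complex mat) \<in> carrier_mat n n" "W \<in> carrier_mat n m" "A * W = W * mat_diag m d" "j < m"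
  shows "A *\<^sub>v col W j = d j \<cdot>\<^sub>v col W j"
proof -
  have "A *\<^sub>v col W j = col (W * mat_diag m d) j"
    using col_mult2[OF assms(1,2,4)] assms(3) by simp
  also have "\<dots> = d j \<cdot>\<^sub>v col W j"
    using assms by (auto simp: mat_diag_mult_right mult.commute)
  finally show ?thesis .
qed

section \<open>The condition number of an eigenvector in an orthonormal eigenbasis\<close>

lemma mult_adjoint_mult_eq_of_range_subset:
  assumes U: "U \<in> carrier_mat n m" and isometry: "mat_adjoint U * U = 1\<^sub>m m" and W: "W \<in> carrier_mat n k"
    and range: "{W *\<^sub>v z | z. z \<in> carrier_vec k} \<subseteq> {U *\<^sub>v z | z. z \<in> carrier_vec m}"
  shows "U * (mat_adjoint U * W) = (W :: complex mat)"
proof (rule mat_col_eqI)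
  fix j assume "j < dim_col W"
  then have j: "j < k" using W by simp
  have UH: "mat_adjoint U \<in> carrier_mat m n" using U by simp
  have "col W j = W *\<^sub>v unit_vec k j"
    using W j by (rule col_eq_mult_unit_vec)
  then have "col W j \<in> {U *\<^sub>v z | z. z \<in> carrier_vec m}"
    using range unit_vec_carrier[of k j] by blast
  then obtain z where z: "z \<in> carrier_vec m" "col W j = U *\<^sub>v z"
    by blast
  have "mat_adjoint U *\<^sub>v col W j = z"
    using assoc_mult_mat_vec[OF UH U z(1)] isometry z by simp
  then show "col (U * (mat_adjoint U * W)) j = col W j"
    using col_mult2[OF U mult_carrier_mat[OF UH W] j] col_mult2[OF UH W j] z(2) by simp
qed (use U W in simp_all)

lemma compression_unitary_diag:
  assumes A: "A \<in> carrier_mat n n" and U: "U \<in> carrier_mat n m" and W: "W \<in> carrier_mat n m"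
    and U_isometry: "mat_adjoint U * U = 1\<^sub>m m" and W_isometry: "mat_adjoint W * W = 1\<^sub>m m"
    and eigen: "A * W = W * mat_diag m d" and W_in_range: "U * (mat_adjoint U * W) = W"
  defines "Z \<equiv> mat_adjoint U * W"
  shows "mat_adjoint Z * Z = 1\<^sub>m m"
    and "mat_adjoint U * A * U = Z * mat_diag m d * mat_adjoint (Z :: complex mat)"
proof -
  have UH: "mat_adjoint U \<in> carrier_mat m n" using U by simp
  have Z: "Z \<in> carrier_mat m m" unfolding Z_def using UH W by (rule mult_carrier_mat)
  have ZH: "mat_adjoint Z = mat_adjoint W * U"
    unfolding Z_def mat_adjoint_mult[OF UH W] by simp
  have "mat_adjoint Z * Z = mat_adjoint W * (U * Z)"
    unfolding ZH using mat_adjoint_carrier[OF W] U Z by (rule assoc_mult_mat)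
  then show unitary: "mat_adjoint Z * Z = 1\<^sub>m m"
    using W_in_range W_isometry unfolding Z_def by simp
  have UAU: "mat_adjoint U * A * U \<in> carrier_mat m m"
    using mult_carrier_mat[OF mult_carrier_mat[OF UH A] U] .
  have "mat_adjoint U * A * U * Z = mat_adjoint U * A * W"
    using assoc_mult_mat[OF mult_carrier_mat[OF UH A] U Z] W_in_range unfolding Z_def by simp
  also have "\<dots> = Z * mat_diag m d"
    using assoc_mult_mat[OF UH A W] assoc_mult_mat[OF UH W mat_diag_dim] eigen unfolding Z_def by simp
  finally have "mat_adjoint U * A * U * Z * mat_adjoint Z = Z * mat_diag m d * mat_adjoint Z"
    by simp
  then show "mat_adjoint U * A * U = Z * mat_diag m d * mat_adjoint Z"
    using assoc_mult_mat[OF UAU Z mat_adjoint_carrier[OF Z]] unitary_mult_adjoint[OF Z unitary]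
    by (simp add: right_mult_one_mat[OF UAU])
qed

lemma insert_index_eq_iff [simp]: "insert_index p i = insert_index p j \<longleftrightarrow> i = j"
  unfolding insert_index_def by auto

lemma insert_index_less: "k < m - 1 \<Longrightarrow> p < m \<Longrightarrow> insert_index p k < m"
  unfolding insert_index_def by auto

definition drop_col :: "nat \<Rightarrow> 'a mat \<Rightarrow> 'a mat" where
  "drop_col p W = mat (dim_row W) (dim_col W - 1) (\<lambda>(i, k). W $$ (i, insert_index p k))"

lemma drop_col_carrier: "W \<in> carrier_mat n m \<Longrightarrow> drop_col p W \<in> carrier_mat n (m - 1)"
  unfolding drop_col_def by simp

lemma col_drop_col: "k < dim_col W - 1 \<Longrightarrow> col (drop_col p W) k = col W (insert_index p k)"
  unfolding drop_col_def insert_index_def by (rule eq_vecI) auto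

lemma drop_col_isometry:
  assumes "(W :: complex mat) \<in> carrier_mat n m" "mat_adjoint W * W = 1\<^sub>m m" "p < m"
  shows "mat_adjoint (drop_col p W) * drop_col p W = 1\<^sub>m (m - 1)"
proof -
  have W_orthonormal: "col W j \<bullet>c col W i = (if i = j then 1 else 0)" if "i < m" "j < m" for i j
    using index_mat_adjoint_mult_self[of i W j] assms that by simp
  have V: "drop_col p W \<in> carrier_mat n (m - 1)"
    using assms(1) by (rule drop_col_carrier)
  have "mat_adjoint (drop_col p W) * drop_col p W = 1\<^sub>m (dim_col (drop_col p W))"
  proof (rule mat_adjoint_mult_self_eq_oneI)
    fix i j assume "i < dim_col (drop_col p W)" "j < dim_col (drop_col p W)"
    then have "i < m - 1" "j < m - 1" using V by auto
    then show "col (drop_col p W) j \<bullet>c col (drop_col p W) i = (if i = j then 1 else 0)"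
      using assms W_orthonormal insert_index_less
      by (auto simp: col_drop_col)
  qed
  then show ?thesis using V by simp
qed

lemma mult_drop_col_eigen:
  assumes A: "(A :: complex mat) \<in> carrier_mat n n" and W: "W \<in> carrier_mat n m" and eigen: "A * W = W * mat_diag m d"
    and "p < m"
  shows "A * drop_col p W = drop_col p W * mat_diag (m - 1) (\<lambda>k. d (insert_index p k))"
proof (rule mat_col_eqI)
  fix k assume "k < dim_col (drop_col p W * mat_diag (m - 1) (\<lambda>k. d (insert_index p k)))"
  then have k: "k < m - 1" by (simp add: mat_diag_def)
  have V: "drop_col p W \<in> carrier_mat n (m - 1)" using W by (rule drop_col_carrier)
  have "col (A * drop_col p W) k = A *\<^sub>v col W (insert_index p k)"
    using col_mult2[OF A V k] col_drop_col[of k W p] k W by simp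
  also have "\<dots> = d (insert_index p k) \<cdot>\<^sub>v col (drop_col p W) k"
    using mult_mat_diag_eqD[OF A W eigen insert_index_less[OF k \<open>p < m\<close>]] col_drop_col[of k W p] k W
    by simp
  also have "\<dots> = col (drop_col p W * mat_diag (m - 1) (\<lambda>k. d (insert_index p k))) k"
    using V k by (auto simp: mat_diag_mult_right mult.commute)
  finally show "col (A * drop_col p W) k = col (drop_col p W * mat_diag (m - 1) (\<lambda>k. d (insert_index p k))) k" .
qed (use A W in \<open>simp_all add: drop_col_def mat_diag_def\<close>)

lemma drop_col_mult_vec:
  assumes W: "W \<in> carrier_mat n m" and "p < m" and z: "z \<in> carrier_vec (m - 1)"
  shows "drop_col p W *\<^sub>v z = W *\<^sub>v vec m (\<lambda>j. if j = p then 0 else z $ delete_index p j)"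
proof (rule eq_vecI)
  fix i assume "i < dim_vec (W *\<^sub>v vec m (\<lambda>j. if j = p then 0 else z $ delete_index p j))"
  then have i: "i < n" using W by simp
  define f where "f j = W $$ (i, j) * (if j = p then 0 else z $ delete_index p j)" for j
  have image: "insert_index p ` {0..<m - 1} = {0..<m} - {p}"
    using insert_index_image[of p "m - 1"] \<open>p < m\<close> by simp
  have "(W *\<^sub>v vec m (\<lambda>j. if j = p then 0 else z $ delete_index p j)) $ i = sum f {0..<m}"
    using i W unfolding f_def by (simp add: scalar_prod_def)
  also have "\<dots> = sum f ({0..<m} - {p})"
    by (rule sum.mono_neutral_right) (auto simp: f_def)
  also have "\<dots> = (\<Sum>k\<in>{0..<m - 1}. f (insert_index p k))"
    unfolding image[symmetric] using sum.reindex[OF insert_index_inj_on[of p "{0..<m - 1}"], of f] by simp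
  also have "\<dots> = (drop_col p W *\<^sub>v z) $ i"
    using i W z insert_index_less[OF _ \<open>p < m\<close>]
    by (auto simp: f_def drop_col_def scalar_prod_def intro!: sum.cong)
  finally show "(drop_col p W *\<^sub>v z) $ i = (W *\<^sub>v vec m (\<lambda>j. if j = p then 0 else z $ delete_index p j)) $ i" ..
qed (use W in \<open>simp add: drop_col_def\<close>)

lemma shift_mult_eigenbasis:
  assumes A: "(A :: complex mat) \<in> carrier_mat n n" and W: "W \<in> carrier_mat n n"
    and eigen: "A * W = W * mat_diag n d" and u: "u \<in> carrier_vec n"
  shows "(A - a \<cdot>\<^sub>m 1\<^sub>m n) *\<^sub>v (W *\<^sub>v u) = W *\<^sub>v vec n (\<lambda>j. (d j - a) * u $ j)"
proof -
  have Wu: "W *\<^sub>v u \<in> carrier_vec n" using W u by (rule mult_mat_vec_carrier)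
  have "(A - a \<cdot>\<^sub>m 1\<^sub>m n) *\<^sub>v (W *\<^sub>v u) = (A * W) *\<^sub>v u - a \<cdot>\<^sub>v (W *\<^sub>v u)"
    using minus_mult_distrib_mat_vec[OF A smult_carrier_mat[OF one_carrier_mat] Wu]
      assoc_mult_mat_vec[OF A W u] smult_one_mult_vec[OF Wu] by simp
  also have "\<dots> = W *\<^sub>v (mat_diag n d *\<^sub>v u) - W *\<^sub>v (a \<cdot>\<^sub>v u)"
    unfolding eigen using assoc_mult_mat_vec[OF W mat_diag_dim u] mult_mat_vec[OF W u] by simp
  also have "\<dots> = W *\<^sub>v (mat_diag n d *\<^sub>v u - a \<cdot>\<^sub>v u)"
    using mult_minus_distrib_mat_vec[OF W mult_mat_vec_carrier[OF mat_diag_dim u] smult_carrier_vec[THEN iffD2, OF u]]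
    by simp
  also have "mat_diag n d *\<^sub>v u - a \<cdot>\<^sub>v u = vec n (\<lambda>j. (d j - a) * u $ j)"
    using u by (intro eq_vecI) (auto simp: mat_diag_mult_vec algebra_simps)
  finally show ?thesis .
qed

lemma range_shift_eigenbasis:
  assumes A: "(A :: complex mat) \<in> carrier_mat n n" and W: "W \<in> carrier_mat n n"
    and unitary: "mat_adjoint W * W = 1\<^sub>m n" and eigen: "A * W = W * mat_diag n d" and p: "p < n"
    and simple: "\<And>j. j < n \<Longrightarrow> j \<noteq> p \<Longrightarrow> d j \<noteq> d p"
  shows "{(A - d p \<cdot>\<^sub>m 1\<^sub>m n) *\<^sub>v y | y. y \<in> carrier_vec n}
    = {drop_col p W *\<^sub>v z | z. z \<in> carrier_vec (n - 1)}"
proof (intro equalityI subsetI)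
  fix v assume "v \<in> {(A - d p \<cdot>\<^sub>m 1\<^sub>m n) *\<^sub>v y | y. y \<in> carrier_vec n}"
  then obtain y where y: "y \<in> carrier_vec n" and v: "v = (A - d p \<cdot>\<^sub>m 1\<^sub>m n) *\<^sub>v y" by auto
  have WHy: "mat_adjoint W *\<^sub>v y \<in> carrier_vec n"
    using mat_adjoint_carrier[OF W] y by (rule mult_mat_vec_carrier)
  define u where "u = vec n (\<lambda>j. (d j - d p) * (mat_adjoint W *\<^sub>v y) $ j)"
  define z where "z = vec (n - 1) (\<lambda>k. u $ insert_index p k)"
  have z: "z \<in> carrier_vec (n - 1)" by (simp add: z_def)
  have "y = W *\<^sub>v (mat_adjoint W *\<^sub>v y)"
    using assoc_mult_mat_vec[OF W mat_adjoint_carrier[OF W] y] unitary_mult_adjoint[OF W unitary] y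
    by simp
  then have "v = W *\<^sub>v u"
    unfolding v u_def using shift_mult_eigenbasis[OF A W eigen WHy] by simp
  also have "u = vec n (\<lambda>j. if j = p then 0 else z $ delete_index p j)"
    using p by (intro eq_vecI) (auto simp: u_def z_def insert_delete_index delete_index_def)
  also have "W *\<^sub>v \<dots> = drop_col p W *\<^sub>v z"
    using drop_col_mult_vec[OF W p z] by simp
  finally show "v \<in> {drop_col p W *\<^sub>v z | z. z \<in> carrier_vec (n - 1)}"
    using z by auto
next
  fix v assume "v \<in> {drop_col p W *\<^sub>v z | z. z \<in> carrier_vec (n - 1)}"
  then obtain z where z: "z \<in> carrier_vec (n - 1)" and v: "v = drop_col p W *\<^sub>v z" by auto
  define u where "u = vec n (\<lambda>j. if j = p then 0 else z $ delete_index p j)"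
  define g where "g = vec n (\<lambda>j. u $ j / (d j - d p))"
  have g: "g \<in> carrier_vec n" by (simp add: g_def)
  have "u = vec n (\<lambda>j. (d j - d p) * g $ j)"
    using simple by (intro eq_vecI) (auto simp: u_def g_def)
  then have "W *\<^sub>v u = (A - d p \<cdot>\<^sub>m 1\<^sub>m n) *\<^sub>v (W *\<^sub>v g)"
    using shift_mult_eigenbasis[OF A W eigen g] by simp
  then have "v = (A - d p \<cdot>\<^sub>m 1\<^sub>m n) *\<^sub>v (W *\<^sub>v g)"
    unfolding v drop_col_mult_vec[OF W p z] u_def .
  moreover have "W *\<^sub>v g \<in> carrier_vec n" using W g by (rule mult_mat_vec_carrier)
  ultimately show "v \<in> {(A - d p \<cdot>\<^sub>m 1\<^sub>m n) *\<^sub>v y | y. y \<in> carrier_vec n}" by blast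
qed

lemma range_basis_drop_col:
  assumes A: "(A :: complex mat) \<in> carrier_mat n n" and W: "W \<in> carrier_mat n n" and unitary: "mat_adjoint W * W = 1\<^sub>m n"
    and eigen: "A * W = W * mat_diag n d" and p: "p < n"
    and simple: "\<And>j. j < n \<Longrightarrow> j \<noteq> p \<Longrightarrow> d j \<noteq> d p"
  shows "range_basis A (d p) (drop_col p W)"
  unfolding range_basis_def Let_def
  using A drop_col_carrier[OF W] drop_col_isometry[OF W unitary p] range_shift_eigenbasis[OF assms]
  by simp

lemma eigenvector_some_eigenvalue:
  assumes "eigenvector A x a"
  shows "(SOME a. A *\<^sub>v x = a \<cdot>\<^sub>v x) = (a :: complex)"
proof -
  have x: "x \<in> carrier_vec (dim_row A)" "x \<noteq> 0\<^sub>v (dim_row A)" "A *\<^sub>v x = a \<cdot>\<^sub>v x"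
    using assms unfolding eigenvector_def by auto
  obtain i where i: "i < dim_vec x" "x $ i \<noteq> 0"
    using x(1,2) by (metis carrier_vecD eq_vecI index_zero_vec(1,2))
  have "A *\<^sub>v x = (SOME a. A *\<^sub>v x = a \<cdot>\<^sub>v x) \<cdot>\<^sub>v x"
    using x(3) by (rule someI)
  then have "(SOME a. A *\<^sub>v x = a \<cdot>\<^sub>v x) * x $ i = a * x $ i"
    using x(3) i(1) by (metis index_smult_vec(1))
  then show ?thesis using i(2) by simp
qed

lemma mat_inv_compression_eigenbasis:
  assumes A: "(A :: complex mat) \<in> carrier_mat n n" and W: "W \<in> carrier_mat n n"
    and unitary: "mat_adjoint W * W = 1\<^sub>m n" and eigen: "A * W = W * mat_diag n d" and p: "p < n"
    and simple: "\<And>j. j < n \<Longrightarrow> j \<noteq> p \<Longrightarrow> d j \<noteq> d p"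
    and U: "range_basis A (d p) U"
  obtains Z where "Z \<in> carrier_mat (n - 1) (n - 1)" "mat_adjoint Z * Z = 1\<^sub>m (n - 1)"
    "mat_inv (d p \<cdot>\<^sub>m 1\<^sub>m (n - 1) - mat_adjoint U * A * U)
       = Z * mat_diag (n - 1) (\<lambda>k. inverse (d p - d (insert_index p k))) * mat_adjoint Z"
proof -
  have U_carrier: "U \<in> carrier_mat n (n - 1)" and U_isometry: "mat_adjoint U * U = 1\<^sub>m (n - 1)"
    and U_range: "{(A - d p \<cdot>\<^sub>m 1\<^sub>m n) *\<^sub>v y | y. y \<in> carrier_vec n}
      = {U *\<^sub>v z | z. z \<in> carrier_vec (n - 1)}"
    using U A unfolding range_basis_def Let_def by auto
  define V where "V = drop_col p W"
  have V: "V \<in> carrier_mat n (n - 1)" unfolding V_def using W by (rule drop_col_carrier)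
  have "U * (mat_adjoint U * V) = V"
    using U_carrier U_isometry V
    by (rule mult_adjoint_mult_eq_of_range_subset)
      (use U_range range_shift_eigenbasis[OF A W unitary eigen p simple] in \<open>simp add: V_def\<close>)
  define Z where "Z = mat_adjoint U * V"
  have Z: "Z \<in> carrier_mat (n - 1) (n - 1)"
    unfolding Z_def using mat_adjoint_carrier[OF U_carrier] V by (rule mult_carrier_mat)
  note compression = compression_unitary_diag[OF A U_carrier V U_isometry
      drop_col_isometry[OF W unitary p, folded V_def] mult_drop_col_eigen[OF A W eigen p, folded V_def]
      \<open>U * (mat_adjoint U * V) = V\<close>, folded Z_def]
  have nonzero: "d p - d (insert_index p k) \<noteq> 0" if "k < n - 1" for k
    using simple[OF insert_index_less[OF that p]] by simp
  have "mat_inv (d p \<cdot>\<^sub>m 1\<^sub>m (n - 1) - mat_adjoint U * A * U)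
       = Z * mat_diag (n - 1) (\<lambda>k. inverse (d p - d (insert_index p k))) * mat_adjoint Z"
    unfolding compression(2) smult_one_minus_unitary_diag[OF Z compression(1)]
    by (rule mat_inv_unitary_diag[OF Z compression(1) nonzero])
  then show thesis using that Z compression(1) by blast
qed

theorem eigvec_cond_eigenbasis:
  assumes A: "(A :: complex mat) \<in> carrier_mat n n" and W: "W \<in> carrier_mat n n"
    and unitary: "mat_adjoint W * W = 1\<^sub>m n" and eigen: "A * W = W * mat_diag n d" and p: "p < n"
    and simple: "\<And>j. j < n \<Longrightarrow> j \<noteq> p \<Longrightarrow> d j \<noteq> d p"
    and "2 \<le> n" and x: "eigenvector A x (d p)"
  shows "eigvec_cond A x = (MAX j\<in>{..<n} - {p}. 1 / cmod (d p - d j))"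
proof -
  define U where "U = (SOME U. range_basis A (d p) U)"
  have "range_basis A (d p) U"
    unfolding U_def using range_basis_drop_col[OF A W unitary eigen p simple] by (rule someI)
  obtain Z where Z: "Z \<in> carrier_mat (n - 1) (n - 1)" "mat_adjoint Z * Z = 1\<^sub>m (n - 1)"
    and inv: "mat_inv (d p \<cdot>\<^sub>m 1\<^sub>m (n - 1) - mat_adjoint U * A * U)
       = Z * mat_diag (n - 1) (\<lambda>k. inverse (d p - d (insert_index p k))) * mat_adjoint Z"
    by (rule mat_inv_compression_eigenbasis[OF A W unitary eigen p simple \<open>range_basis A (d p) U\<close>])
  have image: "(\<lambda>k. 1 / cmod (d p - d (insert_index p k))) ` {..<n - 1} = (\<lambda>j. 1 / cmod (d p - d j)) ` ({..<n} - {p})"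
  proof -
    have "insert_index p ` {..<n - 1} = {..<n} - {p}"
      using insert_index_image[of p "n - 1"] p by (simp add: lessThan_atLeast0)
    then show ?thesis
      using image_image[of "\<lambda>j. 1 / cmod (d p - d j)" "insert_index p" "{..<n - 1}"] by simp
  qed
  have "eigvec_cond A x = opnorm2 (mat_inv (d p \<cdot>\<^sub>m 1\<^sub>m (n - 1) - mat_adjoint U * A * U))"
    unfolding eigvec_cond_def Let_def eigenvector_some_eigenvalue[OF x] U_def[symmetric] using A by simp
  also have "\<dots> = (MAX k\<in>{..<n - 1}. 1 / cmod (d p - d (insert_index p k)))"
    unfolding inv using opnorm2_unitary_diag[OF Z] \<open>2 \<le> n\<close> by (simp add: norm_inverse divide_inverse)
  also have "\<dots> = (MAX j\<in>{..<n} - {p}. 1 / cmod (d p - d j))"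
    unfolding image ..
  finally show ?thesis .
qed

section \<open>Tridiagonal Toeplitz matrices\<close>

lemma tridiag_toeplitz_carrier [simp]: "tridiag_toeplitz n \<sigma> \<delta> \<tau> \<in> carrier_mat n n"
  and dim_row_tridiag_toeplitz [simp]: "dim_row (tridiag_toeplitz n \<sigma> \<delta> \<tau>) = n"
  and dim_col_tridiag_toeplitz [simp]: "dim_col (tridiag_toeplitz n \<sigma> \<delta> \<tau>) = n"
  unfolding tridiag_toeplitz_def by simp_all

lemma index_tridiag_toeplitz:
  "i < n \<Longrightarrow> j < n \<Longrightarrow> tridiag_toeplitz n \<sigma> \<delta> \<tau> $$ (i, j) =
     (if i = j then \<delta> else if j = i + 1 then \<tau> else if i = j + 1 then \<sigma> else 0)"
  unfolding tridiag_toeplitz_def by simp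

lemma mat_adjoint_tridiag_toeplitz:
  "mat_adjoint (tridiag_toeplitz n \<sigma> \<delta> \<tau>) = tridiag_toeplitz n (cnj \<tau>) (cnj \<delta>) (cnj \<sigma>)"
  by (rule eq_matI) (auto simp: index_tridiag_toeplitz)

lemma normal_tridiag_toeplitz_cmod_eq:
  assumes "2 \<le> n" and "normal_mat (tridiag_toeplitz n \<sigma> \<delta> \<tau>)"
  shows "cmod \<sigma> = cmod \<tau>"
proof -
  let ?T = "tridiag_toeplitz n \<sigma> \<delta> \<tau>"
  have split: "{..<n} = {0, 1} \<union> {2..<n}" using assms(1) by auto
  have "(?T * mat_adjoint ?T) $$ (0, 0) = \<delta> * cnj \<delta> + \<tau> * cnj \<tau>"
    using assms(1) unfolding split
    by (simp add: scalar_prod_def lessThan_atLeast0[symmetric] split sum.union_disjoint index_tridiag_toeplitz)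
  moreover have "(mat_adjoint ?T * ?T) $$ (0, 0) = cnj \<delta> * \<delta> + cnj \<sigma> * \<sigma>"
    using assms(1) unfolding split
    by (simp add: scalar_prod_def lessThan_atLeast0[symmetric] split sum.union_disjoint index_tridiag_toeplitz)
  ultimately have "complex_of_real ((cmod \<tau>)\<^sup>2) = complex_of_real ((cmod \<sigma>)\<^sup>2)"
    using assms(2) unfolding normal_mat_def complex_norm_square by (simp add: mult.commute)
  then have "(cmod \<tau>)\<^sup>2 = (cmod \<sigma>)\<^sup>2"
    by (simp only: of_real_eq_iff)
  then show ?thesis by (simp add: power2_eq_iff_nonneg)
qed

lemma tridiag_toeplitz_mult_vec_index:
  assumes "v \<in> carrier_vec n" "k < n"
  shows "(tridiag_toeplitz n \<sigma> \<delta> \<tau> *\<^sub>v v) $ k =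
    (if k = 0 then 0 else \<sigma> * v $ (k - 1)) + \<delta> * v $ k + (if k + 1 < n then \<tau> * v $ (k + 1) else 0)"
proof -
  have "(tridiag_toeplitz n \<sigma> \<delta> \<tau> *\<^sub>v v) $ k = (\<Sum>l<n. tridiag_toeplitz n \<sigma> \<delta> \<tau> $$ (k, l) * v $ l)"
    using assms by (simp add: scalar_prod_def lessThan_atLeast0)
  also have "\<dots> = (\<Sum>l<n. (if l = k then \<delta> * v $ l else 0)
      + (if l = k + 1 then \<tau> * v $ l else 0) + (if l + 1 = k then \<sigma> * v $ l else 0))"
    using assms(2) by (intro sum.cong) (auto simp: index_tridiag_toeplitz)
  also have "\<dots> = (if k = 0 then 0 else \<sigma> * v $ (k - 1)) + \<delta> * v $ k
      + (if k + 1 < n then \<tau> * v $ (k + 1) else 0)"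
    using assms(2) by (cases k) (auto simp: sum.distrib)
  finally show ?thesis .
qed

lemma sin_add_sin_neighbours:
  "sin (real k * \<theta>) + sin (real (k + 2) * \<theta>) = 2 * sin (real (k + 1) * \<theta>) * cos \<theta>"
  using sin_add[of "real (k + 1) * \<theta>" \<theta>] sin_diff[of "real (k + 1) * \<theta>" \<theta>]
  by (simp add: algebra_simps)

definition sine_vec :: "nat \<Rightarrow> complex \<Rightarrow> real \<Rightarrow> complex vec" where
  "sine_vec n r \<theta> = vec n (\<lambda>k. r ^ k * complex_of_real (sin (real (k + 1) * \<theta>)))"

lemma sine_vec_carrier [simp]: "sine_vec n r \<theta> \<in> carrier_vec n"
  and dim_vec_sine_vec [simp]: "dim_vec (sine_vec n r \<theta>) = n"
  unfolding sine_vec_def by simp_all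

lemma tridiag_toeplitz_mult_sine_vec:
  assumes \<sigma>: "\<sigma> = c * r" and \<tau>: "\<tau> * r = c" and \<theta>: "sin (real (n + 1) * \<theta>) = 0"
  shows "tridiag_toeplitz n \<sigma> \<delta> \<tau> *\<^sub>v sine_vec n r \<theta>
    = (\<delta> + 2 * c * complex_of_real (cos \<theta>)) \<cdot>\<^sub>v sine_vec n r \<theta>"
proof (rule eq_vecI)
  fix k assume "k < dim_vec ((\<delta> + 2 * c * complex_of_real (cos \<theta>)) \<cdot>\<^sub>v sine_vec n r \<theta>)"
  then have k: "k < n" by simp
  define s where "s j = complex_of_real (sin (real j * \<theta>))" for j
  have v: "l < n \<Longrightarrow> sine_vec n r \<theta> $ l = r ^ l * s (l + 1)" for l
    by (simp add: sine_vec_def s_def)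
  have left: "(if k = 0 then 0 else \<sigma> * sine_vec n r \<theta> $ (k - 1)) = c * r ^ k * s k"
  proof (cases k)
    case (Suc j)
    then show ?thesis using v[of j] k by (simp add: \<sigma> mult_ac)
  qed (simp add: s_def)
  have right: "(if k + 1 < n then \<tau> * sine_vec n r \<theta> $ (k + 1) else 0) = c * r ^ k * s (k + 2)"
  proof (cases "k + 1 < n")
    case True
    have "\<tau> * (r ^ (k + 1) * s (k + 2)) = (\<tau> * r) * r ^ k * s (k + 2)"
      by (simp add: mult_ac)
    then show ?thesis using True v[of "k + 1"] by (simp add: \<tau>)
  next
    case False
    then have "k + 2 = n + 1" using k by simp
    then have "s (k + 2) = s (n + 1)" by (rule arg_cong)
    also have "\<dots> = 0" unfolding s_def \<theta> by simp
    finally show ?thesis using False by simp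
  qed
  have three_term: "s k + s (k + 2) = 2 * s (k + 1) * complex_of_real (cos \<theta>)"
    using sin_add_sin_neighbours[of k \<theta>] unfolding s_def of_real_add[symmetric] by simp
  have "c * r ^ k * s k + \<delta> * (r ^ k * s (k + 1)) + c * r ^ k * s (k + 2)
      = c * r ^ k * (s k + s (k + 2)) + \<delta> * (r ^ k * s (k + 1))"
    by (simp add: algebra_simps)
  also have "\<dots> = (\<delta> + 2 * c * complex_of_real (cos \<theta>)) * (r ^ k * s (k + 1))"
    unfolding three_term by (simp add: algebra_simps)
  finally show "(tridiag_toeplitz n \<sigma> \<delta> \<tau> *\<^sub>v sine_vec n r \<theta>) $ k
      = ((\<delta> + 2 * c * complex_of_real (cos \<theta>)) \<cdot>\<^sub>v sine_vec n r \<theta>) $ k"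
    unfolding tridiag_toeplitz_mult_vec_index[OF sine_vec_carrier k] left right using k v[OF k]
    by simp
qed simp

section \<open>The cosine grid\<close>

lemma sin_le_sin_of_add_le_pi:
  assumes "0 \<le> x" "x \<le> y" "x + y \<le> pi"
  shows "sin x \<le> sin y"
proof -
  have "0 \<le> 2 * sin ((y - x) / 2) * cos ((y + x) / 2)"
    using assms by (intro mult_nonneg_nonneg sin_ge_zero cos_ge_zero) auto
  moreover have "sin y - sin x = 2 * sin ((y - x) / 2) * cos ((y + x) / 2)"
    by (rule sin_diff_sin)
  ultimately show ?thesis by linarith
qed

lemma sin_grid_le:
  assumes "0 < N" "0 \<le> a" "a \<le> b" "a + b \<le> N"
  shows "sin (a * pi / N) \<le> sin (b * pi / N)"
proof (rule sin_le_sin_of_add_le_pi)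
  show "0 \<le> a * pi / N" "a * pi / N \<le> b * pi / N"
    using assms by (simp_all add: divide_right_mono)
  have "(a + b) * pi / N \<le> N * pi / N"
    using assms by (intro divide_right_mono mult_right_mono) auto
  then show "a * pi / N + b * pi / N \<le> pi"
    using assms by (simp add: add_divide_distrib distrib_right)
qed

lemma sin_grid_pos: "0 < a \<Longrightarrow> a < N \<Longrightarrow> 0 < sin (a * pi / N)"
  by (intro sin_gt_zero) (simp_all add: divide_less_eq)

lemma sin_grid_reflect: "N \<noteq> 0 \<Longrightarrow> sin ((N - a) * pi / N) = sin (a * pi / N)"
  by (simp add: diff_divide_distrib left_diff_distrib sin_diff)

lemma sin_grid_multiple: "sin (real (n + 1) * (real h * pi / real (n + 1))) = 0"
  by (simp del: of_nat_Suc)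

lemma cos_grid_diff_succ:
  assumes "M \<noteq> 0"
  shows "cos (real j * pi / M) - cos (real (j + 1) * pi / M)
    = 2 * sin ((2 * real j + 1) * pi / (2 * M)) * sin (pi / (2 * M))"
proof -
  have "(real j * pi / M + real (j + 1) * pi / M) / 2 = (2 * real j + 1) * pi / (2 * M)"
    "(real (j + 1) * pi / M - real j * pi / M) / 2 = pi / (2 * M)"
    using assms by (simp_all add: field_simps)
  then show ?thesis
    using cos_diff_cos[of "real j * pi / M" "real (j + 1) * pi / M"] by (simp only:)
qed

lemma cos_grid_antimono:
  "0 < M \<Longrightarrow> i \<le> j \<Longrightarrow> real j \<le> M \<Longrightarrow> cos (real j * pi / M) \<le> cos (real i * pi / M)"
  by (intro cos_monotone_0_pi_le) (simp_all add: divide_right_mono divide_le_eq)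

text \<open>2 sin (pi / (2 (n + 1))) * nearest_gap_sin n h is the distance from cos (h pi / (n + 1))
  to the nearest cos (j pi / (n + 1)), 1 \<le> j \<le> n, j \<noteq> h.\<close>

definition nearest_gap_sin :: "nat \<Rightarrow> nat \<Rightarrow> real" where
  "nearest_gap_sin n h = (if (1 < h \<and> 2 * h \<le> n) \<or> h = n
     then sin ((2 * real h - 1) * pi / (2 * real (n + 1)))
     else sin ((2 * real h + 1) * pi / (2 * real (n + 1))))"

lemma nearest_gap_sin_le_succ:
  "1 \<le> h \<Longrightarrow> h < n \<Longrightarrow> nearest_gap_sin n h \<le> sin ((2 * real h + 1) * pi / (2 * real (n + 1)))"
  unfolding nearest_gap_sin_def by (auto intro!: sin_grid_le)

lemma nearest_gap_sin_le_pred: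
  assumes "1 < h" "h \<le> n"
  shows "nearest_gap_sin n h \<le> sin ((2 * real h - 1) * pi / (2 * real (n + 1)))"
proof -
  have "sin ((2 * real (n + 1) - (2 * real h + 1)) * pi / (2 * real (n + 1)))
      \<le> sin ((2 * real h - 1) * pi / (2 * real (n + 1)))"
    if "n + 1 \<le> 2 * h" using that assms by (intro sin_grid_le) auto
  then show ?thesis
    unfolding nearest_gap_sin_def using assms sin_grid_reflect[of "2 * real (n + 1)" "2 * real h + 1"]
    by auto
qed

lemma cos_grid_gap_ge:
  assumes "1 \<le> h" "h \<le> n" "1 \<le> j" "j \<le> n" "j \<noteq> h"
  shows "2 * sin (pi / (2 * real (n + 1))) * nearest_gap_sin n h
    \<le> \<bar>cos (real h * pi / real (n + 1)) - cos (real j * pi / real (n + 1))\<bar>"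
    (is "2 * ?s * _ \<le> \<bar>?c h - ?c j\<bar>")
proof -
  have "0 < ?s" using sin_grid_pos[of 1 "2 * real (n + 1)"] by simp
  have n1: "real (n + 1) \<noteq> 0" by simp
  show ?thesis
  proof (cases "h < j")
    case True
    have "2 * ?s * nearest_gap_sin n h \<le> 2 * ?s * sin ((2 * real h + 1) * pi / (2 * real (n + 1)))"
      using True assms \<open>0 < ?s\<close> by (intro mult_left_mono nearest_gap_sin_le_succ) auto
    also have "\<dots> = ?c h - ?c (h + 1)"
      unfolding cos_grid_diff_succ[OF n1, of h] by (simp add: mult_ac)
    also have "\<dots> \<le> ?c h - ?c j"
      using True assms by (intro diff_left_mono cos_grid_antimono) auto
    finally show ?thesis by (rule order_trans) (rule abs_ge_self)
  next
    case False
    define i where "i = h - 1"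
    have i: "h = i + 1" "j \<le> i" using False assms unfolding i_def by auto
    have "nearest_gap_sin n h \<le> sin ((2 * real i + 1) * pi / (2 * real (n + 1)))"
      using nearest_gap_sin_le_pred[of h n] i assms by (simp add: algebra_simps)
    then have "2 * ?s * nearest_gap_sin n h \<le> 2 * ?s * sin ((2 * real i + 1) * pi / (2 * real (n + 1)))"
      using \<open>0 < ?s\<close> by (intro mult_left_mono) auto
    also have "\<dots> = ?c i - ?c (i + 1)"
      unfolding cos_grid_diff_succ[OF n1, of i] by (simp add: mult_ac)
    also have "\<dots> \<le> ?c j - ?c h"
      using i assms by (intro diff_mono cos_grid_antimono) auto
    finally show ?thesis by (rule order_trans) (simp add: abs_minus_commute[of "?c h"])
  qed
qed

lemma cos_grid_gap_attained:
  assumes "2 \<le> n" "1 \<le> h" "h \<le> n"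
  obtains j where "1 \<le> j" "j \<le> n" "j \<noteq> h"
    "\<bar>cos (real h * pi / real (n + 1)) - cos (real j * pi / real (n + 1))\<bar>
       = 2 * sin (pi / (2 * real (n + 1))) * nearest_gap_sin n h"
proof -
  let ?c = "\<lambda>j. cos (real j * pi / real (n + 1))"
  let ?s = "sin (pi / (2 * real (n + 1)))"
  have n1: "real (n + 1) \<noteq> 0" by simp
  consider (pred) "(1 < h \<and> 2 * h \<le> n) \<or> h = n" | (succ) "\<not> ((1 < h \<and> 2 * h \<le> n) \<or> h = n)"
    by blast
  then show thesis
  proof cases
    case pred
    define i where "i = h - 1"
    have i: "h = i + 1" "1 \<le> i" using pred assms unfolding i_def by auto
    have "nearest_gap_sin n h = sin ((2 * real i + 1) * pi / (2 * real (n + 1)))"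
      using pred i unfolding nearest_gap_sin_def by (simp add: algebra_simps)
    moreover have "?c h \<le> ?c i"
      using i assms by (intro cos_grid_antimono) auto
    ultimately have "\<bar>?c h - ?c i\<bar> = 2 * ?s * nearest_gap_sin n h"
      using cos_grid_diff_succ[OF n1, of i] i by (simp add: abs_minus_commute abs_of_nonneg mult_ac)
    then show thesis using that[of i] i assms by simp
  next
    case succ
    have "nearest_gap_sin n h = sin ((2 * real h + 1) * pi / (2 * real (n + 1)))"
      unfolding nearest_gap_sin_def by (rule if_not_P[OF succ])
    moreover have "?c (h + 1) \<le> ?c h"
      using succ assms by (intro cos_grid_antimono) auto
    ultimately have "\<bar>?c h - ?c (h + 1)\<bar> = 2 * ?s * nearest_gap_sin n h"
      using cos_grid_diff_succ[OF n1, of h] by (simp add: mult_ac)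
    moreover have "h + 1 \<le> n" using succ assms by auto
    ultimately show thesis using that[of "h + 1"] assms by simp
  qed
qed

lemma nearest_gap_sin_pos: "1 \<le> h \<Longrightarrow> h \<le> n \<Longrightarrow> 0 < nearest_gap_sin n h"
  unfolding nearest_gap_sin_def by (auto intro!: sin_grid_pos)

lemma sin_three_le_nearest_gap_sin:
  "2 \<le> n \<Longrightarrow> 1 \<le> h \<Longrightarrow> h \<le> n \<Longrightarrow> sin (3 * pi / (2 * real (n + 1))) \<le> nearest_gap_sin n h"
  unfolding nearest_gap_sin_def by (auto intro!: sin_grid_le)

lemma nearest_gap_sin_extremal:
  assumes "2 \<le> n" "h \<in> {1, 2, n - 1, n}"
  shows "nearest_gap_sin n h = sin (3 * pi / (2 * real (n + 1)))"
proof -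
  have "nearest_gap_sin n h = sin (3 * pi / (2 * real (n + 1)))
      \<or> nearest_gap_sin n h = sin ((2 * real n - 1) * pi / (2 * real (n + 1)))"
    using assms unfolding nearest_gap_sin_def by (cases "n = 3") (auto simp: of_nat_diff)
  moreover have "sin ((2 * real n - 1) * pi / (2 * real (n + 1))) = sin (3 * pi / (2 * real (n + 1)))"
    using sin_grid_reflect[of "2 * real (n + 1)" 3] by (simp add: algebra_simps)
  ultimately show ?thesis by auto
qed

section \<open>Normal tridiagonal Toeplitz matrices\<close>

locale normal_tridiag_toeplitz =
  fixes n :: nat and \<sigma> \<delta> \<tau> :: complex
  assumes sigma_tau_nonzero: "\<sigma> * \<tau> \<noteq> 0" and cmod_sigma_eq_cmod_tau: "cmod \<sigma> = cmod \<tau>"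
begin

definition \<rho> :: complex where "\<rho> = csqrt (\<sigma> * \<tau>) / \<tau>"

definition eigval :: "nat \<Rightarrow> complex" where
  "eigval h = \<delta> + 2 * csqrt (\<sigma> * \<tau>) * complex_of_real (cos (real h * pi / real (n + 1)))"

definition eigvec :: "nat \<Rightarrow> complex vec" where
  "eigvec h = sine_vec n \<rho> (real h * pi / real (n + 1))"

text \<open>Eigenvalues are indexed from 1 as in the paper, so column j of eigbasis is the normalised
  eigenvector for the index j + 1.\<close>

definition eigbasis :: "complex mat" where
  "eigbasis = mat n n (\<lambda>(i, j). eigvec (j + 1) $ i / complex_of_real (vnorm (eigvec (j + 1))))"

lemma eigvec_carrier [simp]: "eigvec h \<in> carrier_vec n"
  unfolding eigvec_def by simp

lemma eigbasis_carrier: "eigbasis \<in> carrier_mat n n"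
  unfolding eigbasis_def by simp

lemma sigma_eq: "\<sigma> = csqrt (\<sigma> * \<tau>) * \<rho>"
  using power2_csqrt[of "\<sigma> * \<tau>"] sigma_tau_nonzero unfolding \<rho>_def
  by (simp add: power2_eq_square field_simps)

lemma tau_mult_rho: "\<tau> * \<rho> = csqrt (\<sigma> * \<tau>)"
  using sigma_tau_nonzero unfolding \<rho>_def by simp

lemma cnj_rho_mult_rho: "cnj \<rho> * \<rho> = 1"
proof -
  have "cmod (csqrt (\<sigma> * \<tau>)) = cmod \<tau>"
    using cmod_sigma_eq_cmod_tau by (simp add: norm_mult)
  then have "cmod \<rho> = 1"
    using sigma_tau_nonzero unfolding \<rho>_def by (simp add: norm_divide)
  then show ?thesis
    using complex_norm_square[of \<rho>] by (simp add: mult.commute)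
qed

lemma tridiag_toeplitz_mult_eigvec:
  "tridiag_toeplitz n \<sigma> \<delta> \<tau> *\<^sub>v eigvec h = eigval h \<cdot>\<^sub>v eigvec h"
  unfolding eigvec_def eigval_def
  by (rule tridiag_toeplitz_mult_sine_vec[OF sigma_eq tau_mult_rho sin_grid_multiple])

lemma adjoint_tridiag_toeplitz_mult_eigvec:
  "mat_adjoint (tridiag_toeplitz n \<sigma> \<delta> \<tau>) *\<^sub>v eigvec h = cnj (eigval h) \<cdot>\<^sub>v eigvec h"
proof -
  have "cnj \<tau> * (cnj \<rho> * \<rho>) = cnj (csqrt (\<sigma> * \<tau>)) * \<rho>"
    using arg_cong[OF tau_mult_rho, of cnj] by (simp add: mult.assoc[symmetric])
  then have \<tau>: "cnj \<tau> = cnj (csqrt (\<sigma> * \<tau>)) * \<rho>"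
    unfolding cnj_rho_mult_rho by simp
  have "cnj \<sigma> * \<rho> = cnj (csqrt (\<sigma> * \<tau>)) * (cnj \<rho> * \<rho>)"
    by (subst sigma_eq) (simp add: mult.assoc)
  then have \<sigma>: "cnj \<sigma> * \<rho> = cnj (csqrt (\<sigma> * \<tau>))"
    unfolding cnj_rho_mult_rho by simp
  show ?thesis
    unfolding mat_adjoint_tridiag_toeplitz eigvec_def
    using tridiag_toeplitz_mult_sine_vec[OF \<tau> \<sigma> sin_grid_multiple[of n h], of "cnj \<delta>"]
    by (simp add: eigval_def)
qed

lemma eigval_eq_iff:
  assumes "h \<le> n" "j \<le> n"
  shows "eigval h = eigval j \<longleftrightarrow> h = j"
proof
  assume "eigval h = eigval j"
  moreover have "csqrt (\<sigma> * \<tau>) \<noteq> 0" using sigma_tau_nonzero by simp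
  ultimately have "complex_of_real (cos (real h * pi / real (n + 1)))
      = complex_of_real (cos (real j * pi / real (n + 1)))"
    unfolding eigval_def by simp
  then have "cos (real h * pi / real (n + 1)) = cos (real j * pi / real (n + 1))"
    by (simp only: of_real_eq_iff)
  moreover have "real h * pi / real (n + 1) \<le> pi" "real j * pi / real (n + 1) \<le> pi"
    using assms by (simp_all add: pos_divide_le_eq)
  ultimately have "real h * pi / real (n + 1) = real j * pi / real (n + 1)"
    using cos_inj_pi[of "real h * pi / real (n + 1)" "real j * pi / real (n + 1)"] by simp
  then show "h = j" by simp
qed simp

lemma vnorm_eigvec_pos:
  assumes "1 \<le> h" "h \<le> n"
  shows "0 < vnorm (eigvec h)"
proof -
  have "eigvec h $ 0 = complex_of_real (sin (real h * pi / real (n + 1)))"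
    using assms unfolding eigvec_def sine_vec_def by simp
  moreover have "0 < sin (real h * pi / real (n + 1))"
    using assms by (intro sin_grid_pos) auto
  ultimately have "eigvec h \<noteq> 0\<^sub>v n"
    using assms by auto
  then show ?thesis
    using vnorm_eq_0_iff[of "eigvec h" n] vnorm_nonneg[of "eigvec h"] by (simp add: eigvec_def)
qed

lemma col_eigbasis:
  "j < n \<Longrightarrow> col eigbasis j = (1 / complex_of_real (vnorm (eigvec (j + 1)))) \<cdot>\<^sub>v eigvec (j + 1)"
  unfolding eigbasis_def by (rule eq_vecI) (auto simp: eigvec_def)

lemma eigbasis_unitary: "mat_adjoint eigbasis * eigbasis = 1\<^sub>m n"
proof -
  have "col eigbasis j \<bullet>c col eigbasis i = (if i = j then 1 else 0)" if "i < n" "j < n" for i j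
  proof -
    have "col eigbasis j \<bullet>c col eigbasis i = 1 / complex_of_real (vnorm (eigvec (j + 1)))
        * cnj (1 / complex_of_real (vnorm (eigvec (i + 1)))) * (eigvec (j + 1) \<bullet>c eigvec (i + 1))"
      using that by (simp add: col_eigbasis cscalar_prod_smult[of _ n])
    also have "\<dots> = (if i = j then 1 else 0)"
    proof (cases "i = j")
      case True
      have "vnorm (eigvec (j + 1)) \<noteq> 0"
        using vnorm_eigvec_pos[of "j + 1"] that by simp
      then show ?thesis
        using True by (simp add: cscalar_prod_self power2_eq_square)
    next
      case False
      have "eigvec (j + 1) \<bullet>c eigvec (i + 1) = 0"
        using that False eigval_eq_iff[of "j + 1" "i + 1"]
        by (intro cscalar_prod_eigenvectors_eq_0[OF tridiag_toeplitz_carrier _ _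
              tridiag_toeplitz_mult_eigvec adjoint_tridiag_toeplitz_mult_eigvec]) auto
      then show ?thesis using False by simp
    qed
    finally show ?thesis .
  qed
  then show ?thesis
    using mat_adjoint_mult_self_eq_oneI[of eigbasis] eigbasis_carrier by simp
qed

lemma tridiag_toeplitz_mult_eigbasis:
  "tridiag_toeplitz n \<sigma> \<delta> \<tau> * eigbasis = eigbasis * mat_diag n (\<lambda>j. eigval (j + 1))"
  using tridiag_toeplitz_carrier eigbasis_carrier
proof (rule mult_mat_diag_eqI)
  fix j assume "j < n"
  then show "tridiag_toeplitz n \<sigma> \<delta> \<tau> *\<^sub>v col eigbasis j = eigval (j + 1) \<cdot>\<^sub>v col eigbasis j"
    by (simp add: col_eigbasis mult_mat_vec[of _ n n] tridiag_toeplitz_mult_eigvec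
        smult_smult_assoc mult.commute)
qed

lemma cmod_eigval_diff:
  "cmod (eigval h - eigval j)
    = 2 * cmod \<sigma> * \<bar>cos (real h * pi / real (n + 1)) - cos (real j * pi / real (n + 1))\<bar>"
proof -
  have "eigval h - eigval j = 2 * csqrt (\<sigma> * \<tau>)
      * complex_of_real (cos (real h * pi / real (n + 1)) - cos (real j * pi / real (n + 1)))"
    unfolding eigval_def by (simp add: algebra_simps)
  moreover have "cmod (csqrt (\<sigma> * \<tau>)) = cmod \<sigma>"
    using cmod_sigma_eq_cmod_tau by (simp add: norm_mult)
  ultimately show ?thesis by (simp only: norm_mult norm_of_real) simp
qed

lemma cmod_eigval_diff_ge:
  assumes "1 \<le> h" "h \<le> n" "1 \<le> j" "j \<le> n" "j \<noteq> h"
  shows "4 * cmod \<sigma> * sin (pi / (2 * real (n + 1))) * nearest_gap_sin n h \<le> cmod (eigval h - eigval j)"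
proof -
  have "4 * cmod \<sigma> * sin (pi / (2 * real (n + 1))) * nearest_gap_sin n h
      = 2 * cmod \<sigma> * (2 * sin (pi / (2 * real (n + 1))) * nearest_gap_sin n h)"
    by simp
  also have "\<dots> \<le> 2 * cmod \<sigma> * \<bar>cos (real h * pi / real (n + 1)) - cos (real j * pi / real (n + 1))\<bar>"
    using cos_grid_gap_ge[OF assms] by (intro mult_left_mono) auto
  finally show ?thesis by (simp only: cmod_eigval_diff)
qed

lemma cmod_eigval_diff_attained:
  assumes "2 \<le> n" "1 \<le> h" "h \<le> n"
  obtains j where "1 \<le> j" "j \<le> n" "j \<noteq> h"
    "cmod (eigval h - eigval j) = 4 * cmod \<sigma> * sin (pi / (2 * real (n + 1))) * nearest_gap_sin n h"
proof -
  obtain j where "1 \<le> j" "j \<le> n" "j \<noteq> h"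
    "\<bar>cos (real h * pi / real (n + 1)) - cos (real j * pi / real (n + 1))\<bar>
       = 2 * sin (pi / (2 * real (n + 1))) * nearest_gap_sin n h"
    using assms by (rule cos_grid_gap_attained)
  then show thesis using that[of j] by (simp add: cmod_eigval_diff)
qed

theorem eigvec_cond_tridiag_toeplitz:
  assumes "2 \<le> n" "1 \<le> h" "h \<le> n" and x: "eigenvector (tridiag_toeplitz n \<sigma> \<delta> \<tau>) x (eigval h)"
  shows "eigvec_cond (tridiag_toeplitz n \<sigma> \<delta> \<tau>) x
    = 1 / (4 * cmod \<sigma> * sin (pi / (2 * real (n + 1))) * nearest_gap_sin n h)"
proof -
  let ?gap = "\<lambda>j. 1 / cmod (eigval h - eigval (j + 1))"
  let ?M = "1 / (4 * cmod \<sigma> * sin (pi / (2 * real (n + 1))) * nearest_gap_sin n h)"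
  have "eigvec_cond (tridiag_toeplitz n \<sigma> \<delta> \<tau>) x = (MAX j\<in>{..<n} - {h - 1}. ?gap j)"
    using eigvec_cond_eigenbasis[OF tridiag_toeplitz_carrier eigbasis_carrier eigbasis_unitary
        tridiag_toeplitz_mult_eigbasis, of "h - 1"] assms eigval_eq_iff by simp
  also have "\<dots> = ?M"
  proof (rule Max_eqI)
    have pos: "0 < 4 * cmod \<sigma> * sin (pi / (2 * real (n + 1))) * nearest_gap_sin n h"
      using sigma_tau_nonzero sin_grid_pos[of 1 "2 * real (n + 1)"] nearest_gap_sin_pos assms by simp
    fix y assume "y \<in> ?gap ` ({..<n} - {h - 1})"
    then obtain j where j: "j < n" "j + 1 \<noteq> h" and y: "y = ?gap j" by force
    show "y \<le> ?M"
      unfolding y using j cmod_eigval_diff_ge[of h "j + 1"] assms pos by (intro frac_le) auto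
  next
    obtain j where "1 \<le> j" "j \<le> n" "j \<noteq> h"
      "cmod (eigval h - eigval j) = 4 * cmod \<sigma> * sin (pi / (2 * real (n + 1))) * nearest_gap_sin n h"
      using assms(1-3) by (rule cmod_eigval_diff_attained)
    then show "?M \<in> ?gap ` ({..<n} - {h - 1})"
      using assms by (intro rev_image_eqI[of "j - 1"]) auto
  qed simp
  finally show ?thesis .
qed

corollary eigvec_cond_tridiag_toeplitz_le:
  assumes "2 \<le> n" "1 \<le> h" "h \<le> n" and x: "eigenvector (tridiag_toeplitz n \<sigma> \<delta> \<tau>) x (eigval h)"
  shows "eigvec_cond (tridiag_toeplitz n \<sigma> \<delta> \<tau>) x
    \<le> 1 / (4 * cmod \<sigma> * sin (pi / (2 * real (n + 1))) * sin (3 * pi / (2 * real (n + 1))))"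
proof -
  have "0 < 4 * cmod \<sigma> * sin (pi / (2 * real (n + 1)))" "0 < sin (3 * pi / (2 * real (n + 1)))"
    using sigma_tau_nonzero sin_grid_pos[of 1 "2 * real (n + 1)"] sin_grid_pos[of 3 "2 * real (n + 1)"]
      assms(1) by simp_all
  then show ?thesis
    unfolding eigvec_cond_tridiag_toeplitz[OF assms]
    using sin_three_le_nearest_gap_sin[OF assms(1-3)] by (intro frac_le mult_left_mono) auto
qed

corollary eigvec_cond_tridiag_toeplitz_extremal:
  assumes "2 \<le> n" "h \<in> {1, 2, n - 1, n}" and x: "eigenvector (tridiag_toeplitz n \<sigma> \<delta> \<tau>) x (eigval h)"
  shows "eigvec_cond (tridiag_toeplitz n \<sigma> \<delta> \<tau>) x
    = 1 / (4 * cmod \<sigma> * sin (pi / (2 * real (n + 1))) * sin (3 * pi / (2 * real (n + 1))))"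
proof -
  have "1 \<le> h" "h \<le> n" using assms(1,2) by auto
  then show ?thesis
    using eigvec_cond_tridiag_toeplitz[OF assms(1) _ _ x] nearest_gap_sin_extremal[OF assms(1,2)] by simp
qed

end

theorem proposition5:
  fixes n :: nat and \<sigma> \<delta> \<tau> :: complex
  defines "T \<equiv> tridiag_toeplitz n \<sigma> \<delta> \<tau>"
    and "lam \<equiv> (\<lambda>h::nat. \<delta> + 2 * csqrt (\<sigma> * \<tau>) * complex_of_real (cos (real h * pi / real (n + 1))))"
    and "s \<equiv> sin (pi / (2 * real (n + 1)))"
  assumes "n \<ge> 2" and "\<sigma> * \<tau> \<noteq> 0"
    and "normal_mat T"
  shows "(\<forall>h x. 1 \<le> h \<and> h \<le> n \<and> eigenvector T x (lam h) \<and> vnorm x = 1 \<longrightarrow>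
            eigvec_cond T x =
              (if (1 < h \<and> 2 * h \<le> n) \<or> h = n
               then 1 / (4 * cmod \<sigma> * s * sin ((2 * real h - 1) * pi / (2 * real (n + 1))))
               else 1 / (4 * cmod \<sigma> * s * sin ((2 * real h + 1) * pi / (2 * real (n + 1))))))
       \<and> (\<forall>h x. 1 \<le> h \<and> h \<le> n \<and> eigenvector T x (lam h) \<and> vnorm x = 1 \<longrightarrow>
            eigvec_cond T x \<le> 1 / (4 * cmod \<sigma> * s * sin (3 * pi / (2 * real (n + 1)))))
       \<and> (\<forall>h x. h \<in> {1, 2, n - 1, n} \<and> eigenvector T x (lam h) \<and> vnorm x = 1 \<longrightarrow>
            eigvec_cond T x = 1 / (4 * cmod \<sigma> * s * sin (3 * pi / (2 * real (n + 1)))))"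
proof -
  have "cmod \<sigma> = cmod \<tau>"
    using normal_tridiag_toeplitz_cmod_eq assms(4,6) unfolding T_def by blast
  then interpret normal_tridiag_toeplitz n \<sigma> \<delta> \<tau>
    using assms(5) by unfold_locales
  have lam: "lam = eigval"
    unfolding lam_def by (simp add: fun_eq_iff eigval_def)
  have cases: "1 / (4 * cmod \<sigma> * s * nearest_gap_sin n h) =
      (if (1 < h \<and> 2 * h \<le> n) \<or> h = n
       then 1 / (4 * cmod \<sigma> * s * sin ((2 * real h - 1) * pi / (2 * real (n + 1))))
       else 1 / (4 * cmod \<sigma> * s * sin ((2 * real h + 1) * pi / (2 * real (n + 1)))))" for h
    unfolding nearest_gap_sin_def by simp
  show ?thesis
    using eigvec_cond_tridiag_toeplitz[OF assms(4)] eigvec_cond_tridiag_toeplitz_le[OF assms(4)]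
      eigvec_cond_tridiag_toeplitz_extremal[OF assms(4)]
    unfolding T_def lam s_def cases[unfolded s_def, symmetric] by blast
qed

end
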